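(* Let $\mathcal V=\{1,\dots,V\}$, $L\ge2$, integers $1\le K<V$, distinct positions $l_1,l_2\in\{1,\dots,L\}$, $\rho\in(0,1)$ with $\rho K\in\mathbb N$, $\mu=\rho/(1-\rho)$, $a\in[\rho,1]$, $b=\mu(1-a)$, and $\epsilon\in[0,1/2]$. Let $P$ be the distribution on $\mathcal V^L$ with $P(\mathbf x)=\prod_{l=1}^L P(x_l\mid\mathbf x_{<l})$, where for every $l$ and every context $\mathbf x_{<l}$, $P(\cdot\mid\mathbf x_{<l})$ is uniform on a set $\mathcal S(\mathbf x_{<l})\subset\mathcal V$ of size $K$, with $\mathcal S(\mathbf x_{<l_1})=\{1,\dots,K\}$ for all contexts at position $l_1$. Let $Q$ be the autoregressive distribution whose conditionals equal those of $P$ at every position $l\notin\{l_1,l_2\}$ and every context, and for every context satisfy $$Q(x\mid\mathbf x_{<l_1})=\begin{cases}\frac{a}{\rho K}& x\in\{1,\dots,\rho K\}\\ \frac{b}{\rho K}& x\in\{\rho K+1,\dots,K\}\\ 0&\text{otherwise,}\end{cases}\qquad Q(x\mid\mathbf x_{<l_2})=\begin{cases}\frac{1-\epsilon}{K}& x\in\mathcal S(\mathbf x_{<l_2})\\ \frac{\epsilon}{V-K}&\text{otherwise.}\end{cases}$$ For $t>0$ let $\tau=1/t$ and let $Q^t$ be the tempered distribution $Q^t(\mathbf x)=\prod_{l}Q(x_l\mid\mathbf x_{<l})^{\tau}/\sum_{y\in\mathcal V}Q(y\mid\mathbf x_{<l})^{\tau}$ (with $0^\tau=0$). Set $$F=\frac{(1-\epsilon)^{\tau}}{(1-\epsilon)^{\tau}+(V/K-1)^{1-\tau}\epsilon^{\tau}},\quad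 \lambda^t_{\min}=\frac{1}{1-\rho}\,\frac{(1-a)^{\tau}}{(1-a)^{\tau}+\mu^{1-\tau}a^{\tau}}\,F,\quad \lambda^t_{\max}=\frac{\mu^{-\tau}}{1-\rho}\,\frac{a^{\tau}}{(1-a)^{\tau}+\mu^{1-\tau}a^{\tau}}\,F.$$ Then: (i) for all $\lambda\ge\lambda^t_{\max}$: $\alpha_\lambda(P\Vert Q^t)=F$ and $\beta_\lambda(P\Vert Q^t)=F/\lambda$; (ii) for all $\lambda\in[\lambda^t_{\min},\lambda^t_{\max}]$ with $\lambda>0$: $\alpha_\lambda(P\Vert Q^t)=\rho\lambda+\frac{(1-a)^{\tau}}{(1-a)^{\tau}+\mu^{1-\tau}a^{\tau}}F$ and $\beta_\lambda(P\Vert Q^t)=\rho+\frac1\lambda\frac{(1-a)^{\tau}}{(1-a)^{\tau}+\mu^{1-\tau}a^{\tau}}F$; (iii) for all $0<\lambda\le\lambda^t_{\min}$: $\alpha_\lambda(P\Vert Q^t)=\lambda$ and $\beta_\lambda(P\Vert Q^t)=1$.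
   Context: For distributions $P,Q$ on $\mathcal V^L$ and $\lambda>0$: $\alpha_\lambda(P\Vert Q)=\sum_{\mathbf x}\min(\lambda P(\mathbf x),Q(\mathbf x))$ (Precision) and $\beta_\lambda(P\Vert Q)=\sum_{\mathbf x}\min(P(\mathbf x),Q(\mathbf x)/\lambda)$ (Recall). $\mathbf x_{<l}=(x_1,\dots,x_{l-1})$. Note that $b=\mu(1-a)$ is exactly the value making $Q(\cdot\mid\mathbf x_{<l_1})$ sum to one. *)

theory Defs
  imports Complex_Main
begin

text \<open>Vocabulary is {1..V}; a sequence in V^L is a list of length L with entries in {1..V}.
  Position l (1-based) has token xs ! (l-1) and context x_{<l} = take (l-1) xs.\<close>

definition seqs :: "nat \<Rightarrow> nat \<Rightarrow> nat list set" where
  "seqs V L = {xs. length xs = L \<and> set xs \<subseteq> {1..V}}"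

definition ar_dist :: "(nat list \<Rightarrow> nat \<Rightarrow> real) \<Rightarrow> nat \<Rightarrow> nat list \<Rightarrow> real" where
  "ar_dist cond L xs = (\<Prod>l\<in>{1..L}. cond (take (l - 1) xs) (xs ! (l - 1)))"

text \<open>Tempered conditional with exponent tau (0 powr tau = 0).\<close>
definition tempered :: "nat \<Rightarrow> real \<Rightarrow> (nat list \<Rightarrow> nat \<Rightarrow> real) \<Rightarrow> nat list \<Rightarrow> nat \<Rightarrow> real" where
  "tempered V \<tau> cond c x = cond c x powr \<tau> / (\<Sum>y\<in>{1..V}. cond c y powr \<tau>)"

definition precision :: "real \<Rightarrow> ('a \<Rightarrow> real) \<Rightarrow> ('a \<Rightarrow> real) \<Rightarrow> 'a set \<Rightarrow> real" where
  "precision lam P Q X = (\<Sum>x\<in>X. min (lam * P x) (Q x))"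

definition recall :: "real \<Rightarrow> ('a \<Rightarrow> real) \<Rightarrow> ('a \<Rightarrow> real) \<Rightarrow> 'a set \<Rightarrow> real" where
  "recall lam P Q X = (\<Sum>x\<in>X. min (P x) (Q x / lam))"

end

theory Submission
  imports Defs
begin

text \<open>On the support of \<open>P\<close> every conditional of \<open>P\<close> is uniform on \<open>K\<close> tokens, and tempering a
  conditional that is uniform on blocks keeps it uniform on each block. Hence on that support the
  likelihood ratio \<open>Q\<^sup>t/P\<close> is a product of per-position constants: \<open>1\<close> at ordinary positions,
  \<open>F\<close> at \<open>l2\<close>, and \<open>lmax/F\<close> or \<open>lmin/F\<close> at \<open>l1\<close>, according as the token there is at most
  \<open>\<rho>K\<close> or not. As \<open>\<alpha>\<^sub>\<lambda> = E\<^sub>P min(\<lambda>, Q\<^sup>t/P)\<close>, only the marginal of \<open>P\<close> at \<open>l1\<close> matters,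
  and \<open>\<alpha>\<^sub>\<lambda>\<close> is the two-point mixture \<open>\<rho> min(\<lambda>, lmax) + (1 - \<rho>) min(\<lambda>, lmin)\<close>, whose
  mean \<open>\<rho> lmax + (1 - \<rho>) lmin\<close> is \<open>F\<close>; moreover \<open>\<beta>\<^sub>\<lambda> = \<alpha>\<^sub>\<lambda>/\<lambda>\<close>. The three regimes are
  the three positions of \<open>\<lambda>\<close> relative to \<open>lmin \<le> lmax\<close>.\<close>

lemma seqs_Suc: "seqs V (Suc n) = (\<lambda>(xs, y). xs @ [y]) ` (seqs V n \<times> {1..V})"
proof
  show "seqs V (Suc n) \<subseteq> (\<lambda>(xs, y). xs @ [y]) ` (seqs V n \<times> {1..V})"
  proof
    fix zs assume zs: "zs \<in> seqs V (Suc n)"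
    then have "zs \<noteq> []" by (auto simp: seqs_def)
    then have "zs = butlast zs @ [last zs]" by simp
    moreover have "butlast zs \<in> seqs V n"
      using zs by (auto simp: seqs_def dest: in_set_butlastD)
    moreover have "last zs \<in> {1..V}"
      using zs last_in_set[OF \<open>zs \<noteq> []\<close>] by (auto simp: seqs_def)
    ultimately show "zs \<in> (\<lambda>(xs, y). xs @ [y]) ` (seqs V n \<times> {1..V})"
      by (metis (no_types, lifting) SigmaI case_prod_conv image_eqI)
  qed
qed (auto simp: seqs_def)

lemma sum_seqs_Suc:
  "(\<Sum>zs\<in>seqs V (Suc n). f zs) = (\<Sum>xs\<in>seqs V n. \<Sum>y\<in>{1..V}. f (xs @ [y]))"
proof -
  have "inj_on (\<lambda>(xs, y). xs @ [y]) (seqs V n \<times> {1..V})"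
    by (auto simp: inj_on_def)
  then show ?thesis
    unfolding seqs_Suc by (simp add: sum.reindex sum.cartesian_product split_def)
qed

lemma ar_dist_snoc:
  assumes "length xs = n"
  shows "ar_dist cond (Suc n) (xs @ [y]) = ar_dist cond n xs * cond xs y"
proof -
  have "ar_dist cond (Suc n) (xs @ [y]) =
      (\<Prod>l\<in>{1..n}. cond (take (l - 1) (xs @ [y])) ((xs @ [y]) ! (l - 1))) * cond xs y"
    unfolding ar_dist_def using assms by (simp add: atLeastAtMostSuc_conv mult.commute nth_append)
  also have "(\<Prod>l\<in>{1..n}. cond (take (l - 1) (xs @ [y])) ((xs @ [y]) ! (l - 1))) = ar_dist cond n xs"
    unfolding ar_dist_def using assms by (intro prod.cong) (auto simp: nth_append)
  finally show ?thesis .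
qed

lemma sum_ar_dist_take:
  assumes norm: "\<And>c. length c < n \<Longrightarrow> set c \<subseteq> {1..V} \<Longrightarrow> (\<Sum>y\<in>{1..V}. cond c y) = 1"
    and "k \<le> n"
  shows "(\<Sum>xs\<in>seqs V n. ar_dist cond n xs * g (take k xs)) = (\<Sum>xs\<in>seqs V k. ar_dist cond k xs * g xs)"
  using assms
proof (induction n)
  case 0
  then show ?case by (auto simp: seqs_def intro!: sum.cong)
next
  case (Suc n)
  show ?case
  proof (cases "k = Suc n")
    case True
    then show ?thesis by (auto simp: seqs_def intro!: sum.cong)
  next
    case False
    with Suc.prems have k: "k \<le> n" by simp
    have "(\<Sum>xs\<in>seqs V (Suc n). ar_dist cond (Suc n) xs * g (take k xs))
        = (\<Sum>xs\<in>seqs V n. ar_dist cond n xs * g (take k xs) * (\<Sum>y\<in>{1..V}. cond xs y))"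
      unfolding sum_seqs_Suc sum_distrib_left
      by (intro sum.cong refl) (use k in \<open>auto simp: seqs_def ar_dist_snoc\<close>)
    also have "\<dots> = (\<Sum>xs\<in>seqs V n. ar_dist cond n xs * g (take k xs))"
      by (intro sum.cong refl) (use Suc.prems in \<open>auto simp: seqs_def\<close>)
    also have "\<dots> = (\<Sum>xs\<in>seqs V k. ar_dist cond k xs * g xs)"
      using Suc.IH Suc.prems k by auto
    finally show ?thesis .
  qed
qed

lemma sum_ar_dist_eq_1:
  assumes "\<And>c. length c < n \<Longrightarrow> set c \<subseteq> {1..V} \<Longrightarrow> (\<Sum>y\<in>{1..V}. cond c y) = 1"
  shows "(\<Sum>xs\<in>seqs V n. ar_dist cond n xs) = 1"
proof -
  have "seqs V 0 = {[]}" by (auto simp: seqs_def)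
  then show ?thesis
    using sum_ar_dist_take[where g = "\<lambda>_. 1" and k = 0, OF assms] by (simp add: ar_dist_def)
qed

lemma sum_ar_dist_nth:
  assumes norm: "\<And>c. length c < n \<Longrightarrow> set c \<subseteq> {1..V} \<Longrightarrow> (\<Sum>y\<in>{1..V}. cond c y) = 1"
    and l: "l \<in> {1..n}"
    and cond_l: "\<And>c y. length c = l - 1 \<Longrightarrow> set c \<subseteq> {1..V} \<Longrightarrow> cond c y = p y"
  shows "(\<Sum>xs\<in>seqs V n. ar_dist cond n xs * h (xs ! (l - 1))) = (\<Sum>y\<in>{1..V}. p y * h y)"
proof -
  obtain j where j: "l = Suc j" using l by (cases l) auto
  have "(\<Sum>xs\<in>seqs V n. ar_dist cond n xs * h (xs ! (l - 1)))
      = (\<Sum>xs\<in>seqs V n. ar_dist cond n xs * (\<lambda>ys. h (ys ! j)) (take l xs))"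
    using l j by (intro sum.cong refl) auto
  also have "\<dots> = (\<Sum>xs\<in>seqs V l. ar_dist cond l xs * h (xs ! j))"
    using sum_ar_dist_take[OF norm] l by auto
  also have "\<dots> = (\<Sum>xs\<in>seqs V j. ar_dist cond j xs) * (\<Sum>y\<in>{1..V}. p y * h y)"
    unfolding j sum_seqs_Suc sum_product
    by (intro sum.cong refl) (auto simp: seqs_def ar_dist_snoc cond_l j nth_append)
  also have "(\<Sum>xs\<in>seqs V j. ar_dist cond j xs) = 1"
    using sum_ar_dist_eq_1[OF norm] j l by auto
  finally show ?thesis by simp
qed

lemma precision_eq_sum_min_ratio:
  assumes "\<And>x. x \<in> X \<Longrightarrow> 0 \<le> P x" and "\<And>x. x \<in> X \<Longrightarrow> 0 \<le> Q x"
    and "\<And>x. x \<in> X \<Longrightarrow> P x \<noteq> 0 \<Longrightarrow> Q x = P x * g x"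
  shows "precision lam P Q X = (\<Sum>x\<in>X. P x * min lam (g x))"
  unfolding precision_def
proof (intro sum.cong refl)
  fix x assume "x \<in> X"
  then show "min (lam * P x) (Q x) = P x * min lam (g x)"
    using assms by (cases "P x = 0") (auto simp: min_mult_distrib_left mult.commute)
qed

lemma recall_eq_precision_divide:
  assumes "0 < lam"
  shows "recall lam P Q X = precision lam P Q X / lam"
  unfolding recall_def precision_def sum_divide_distrib
  using assms by (intro sum.cong refl) (simp add: min_divide_distrib_right)

text \<open>The mass that tempering with exponent \<open>\<tau>\<close> leaves on a block of uniformly spread mass
  \<open>p\<close> when the remaining mass \<open>q\<close> is spread uniformly over \<open>r\<close> times as many tokens.\<close>

definition tempered_share :: "real \<Rightarrow> real \<Rightarrow> real \<Rightarrow> real \<Rightarrow> real" where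
  "tempered_share \<tau> r p q = p powr \<tau> / (p powr \<tau> + r powr (1 - \<tau>) * q powr \<tau>)"

lemma tempered_share_per_token:
  fixes n k p q :: real
  assumes "0 < n" "0 \<le> k" "0 \<le> p" "0 \<le> q"
  shows "(p / n) powr \<tau> / (n * (p / n) powr \<tau> + k * (q / k) powr \<tau>) = tempered_share \<tau> (k / n) p q / n"
proof (cases "k = 0 \<or> p = 0")
  case True
  then show ?thesis using assms by (auto simp: tempered_share_def powr_divide)
next
  case False
  with assms have pos: "0 < k" "0 < p" by auto
  have "0 < n * p powr \<tau> * k powr \<tau> + k * n powr \<tau> * q powr \<tau>"
    using assms pos by (intro add_pos_nonneg) auto
  moreover have "(p / n) powr \<tau> / (n * (p / n) powr \<tau> + k * (q / k) powr \<tau>)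
      = p powr \<tau> * k powr \<tau> / (n * p powr \<tau> * k powr \<tau> + k * n powr \<tau> * q powr \<tau>)"
    using assms pos by (simp add: powr_divide field_simps)
  ultimately show ?thesis
    using assms pos unfolding tempered_share_def
    by (simp add: powr_divide powr_diff divide_simps) (simp add: algebra_simps)
qed

lemma tempered_share_swap:
  fixes n k :: real
  assumes "0 < n" "0 < k"
  shows "tempered_share \<tau> (n / k) p q
    = (k / n) powr (1 - \<tau>) * p powr \<tau> / (q powr \<tau> + (k / n) powr (1 - \<tau>) * p powr \<tau>)"
proof -
  define c where "c = (k / n) powr (1 - \<tau>)"
  have "0 < c" and c_inverse: "(n / k) powr (1 - \<tau>) * c = 1"
    using assms by (simp_all add: c_def flip: powr_mult)
  then have "tempered_share \<tau> (n / k) p q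
      = c * p powr \<tau> / (c * (p powr \<tau> + (n / k) powr (1 - \<tau>) * q powr \<tau>))"
    unfolding tempered_share_def by simp
  also have "\<dots> = c * p powr \<tau> / (q powr \<tau> + c * p powr \<tau>)"
    using c_inverse by (simp add: algebra_simps)
  finally show ?thesis unfolding c_def .
qed

lemma tempered_share_complement:
  fixes n k :: real
  assumes "0 < n" "0 < k" "0 < p"
  shows "tempered_share \<tau> (k / n) p q + tempered_share \<tau> (n / k) q p = 1"
proof -
  have "0 < p powr \<tau> + (k / n) powr (1 - \<tau>) * q powr \<tau>"
    using assms by (intro add_pos_nonneg) auto
  then show ?thesis
    unfolding tempered_share_swap[OF assms(1,2)] by (simp add: tempered_share_def add_divide_distrib[symmetric])
qed

lemma tempered_two_block:
  fixes cond :: "nat list \<Rightarrow> nat \<Rightarrow> real"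
  assumes "A \<subseteq> {1..V}" "B \<subseteq> {1..V}" "A \<inter> B = {}" "0 \<le> p" "0 \<le> q"
    and cond: "\<And>y. y \<in> {1..V} \<Longrightarrow>
      cond c y = (if y \<in> A then p / card A else if y \<in> B then q / card B else 0)"
    and "x \<in> A"
  shows "tempered V \<tau> cond c x = tempered_share \<tau> (card B / card A) p q / card A"
proof -
  have fin: "finite A" "finite B" using assms(1,2) finite_subset by auto
  have "(\<Sum>y\<in>{1..V}. cond c y powr \<tau>) = (\<Sum>y\<in>{1..V}.
      (if y \<in> A then (p / card A) powr \<tau> else 0) + (if y \<in> B then (q / card B) powr \<tau> else 0))"
    using assms(3) by (intro sum.cong refl) (auto simp: cond)
  also have "\<dots> = card A * (p / card A) powr \<tau> + card B * (q / card B) powr \<tau>"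
    using assms(1,2) by (simp add: sum.distrib flip: sum.inter_restrict) (simp add: Int_absorb1)
  finally have "(\<Sum>y\<in>{1..V}. cond c y powr \<tau>) = card A * (p / card A) powr \<tau> + card B * (q / card B) powr \<tau>" .
  moreover have "cond c x = p / card A"
    using assms cond by auto
  moreover have "0 < card A"
    using fin \<open>x \<in> A\<close> card_gt_0_iff by blast
  ultimately show ?thesis
    unfolding tempered_def using assms tempered_share_per_token[of "card A" "card B" p q \<tau>] by simp
qed

lemma tempered_mono:
  assumes "0 \<le> \<tau>" "0 \<le> cond c x" "cond c x \<le> cond c y"
  shows "tempered V \<tau> cond c x \<le> tempered V \<tau> cond c y"
  unfolding tempered_def using assms by (intro divide_right_mono powr_mono2 sum_nonneg) auto

locale two_position_perturbation =
  fixes V L K m l1 l2 :: nat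
    and \<rho> \<mu> a b \<epsilon> \<tau> :: real
    and S :: "nat list \<Rightarrow> nat set"
    and Pc Qc :: "nat list \<Rightarrow> nat \<Rightarrow> real"
  assumes K_pos: "1 \<le> K" and K_less_V: "K < V"
    and l1: "l1 \<in> {1..L}" and l2: "l2 \<in> {1..L}" and l1_neq_l2: "l1 \<noteq> l2"
    and \<rho>_pos: "0 < \<rho>" and \<rho>_less_1: "\<rho> < 1" and m_eq: "\<rho> * real K = real m"
    and \<mu>_def: "\<mu> = \<rho> / (1 - \<rho>)"
    and a_ge: "\<rho> \<le> a" and a_le_1: "a \<le> 1" and b_def: "b = \<mu> * (1 - a)"
    and \<epsilon>_nonneg: "0 \<le> \<epsilon>" and \<epsilon>_less_1: "\<epsilon> < 1"
    and \<tau>_nonneg: "0 \<le> \<tau>"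
    and S_sub: "\<And>c. length c < L \<Longrightarrow> set c \<subseteq> {1..V} \<Longrightarrow> S c \<subseteq> {1..V} \<and> card (S c) = K"
    and S_l1: "\<And>c. length c = l1 - 1 \<Longrightarrow> set c \<subseteq> {1..V} \<Longrightarrow> S c = {1..K}"
    and Pc_def: "\<And>c x. Pc c x = (if x \<in> S c then 1 / real K else 0)"
    and Qc_def: "\<And>c x. Qc c x =
        (if length c = l1 - 1 then
           (if 1 \<le> x \<and> real x \<le> \<rho> * real K then a / (\<rho> * real K)
            else if \<rho> * real K < real x \<and> x \<le> K then b / (\<rho> * real K)
            else 0)
         else if length c = l2 - 1 then
           (if x \<in> S c then (1 - \<epsilon>) / real K
            else if x \<in> {1..V} then \<epsilon> / real (V - K) else 0)
         else Pc c x)"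
begin

lemma m_pos: "0 < m"
proof -
  have "0 < \<rho> * real K" using \<rho>_pos K_pos by simp
  then show ?thesis using m_eq by simp
qed

lemma m_less_K: "m < K"
proof -
  have "\<rho> * real K < real K" using \<rho>_less_1 K_pos by simp
  then show ?thesis using m_eq by simp
qed

lemma \<rho>_eq: "\<rho> = real m / real K"
  using m_eq K_pos by (simp add: field_simps)

lemma one_minus_\<rho>_eq: "1 - \<rho> = real (K - m) / real K"
  using m_less_K K_pos unfolding \<rho>_eq by (simp add: of_nat_diff field_simps)

lemma \<mu>_eq: "\<mu> = real m / real (K - m)"
  using m_less_K K_pos unfolding \<mu>_def \<rho>_eq by (simp add: of_nat_diff field_simps)

lemma Qc_l1:
  assumes "length c = l1 - 1"
  shows "Qc c x = (if x \<in> {1..m} then a / real m else if x \<in> {m<..K} then (1 - a) / real (K - m) else 0)"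
proof -
  have "b / real m = (1 - a) / real (K - m)"
    using m_pos m_less_K unfolding b_def \<mu>_eq by (simp add: field_simps)
  then show ?thesis using assms by (simp add: Qc_def m_eq)
qed

lemma Qc_l2:
  assumes "length c = l2 - 1"
  shows "Qc c x = (if x \<in> S c then (1 - \<epsilon>) / real K else if x \<in> {1..V} then \<epsilon> / real (V - K) else 0)"
  using assms l1 l2 l1_neq_l2 by (auto simp: Qc_def)

lemma Qc_other: "length c \<noteq> l1 - 1 \<Longrightarrow> length c \<noteq> l2 - 1 \<Longrightarrow> Qc c x = Pc c x"
  by (simp add: Qc_def)

text \<open>At position \<open>l2\<close> tempering leaves mass \<open>F\<close> on the support of \<open>P\<close>; at position \<open>l1\<close> it leaves
  mass \<open>1 - s\<close> on the tokens \<open>{1..m}\<close>, which carry \<open>P\<close>-mass \<open>\<rho>\<close>, and mass \<open>s\<close> on \<open>{m<..K}\<close>, where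
  \<open>s = tempered_share \<tau> \<mu> (1 - a) a\<close>. So \<open>lmax\<close> and \<open>lmin\<close> are the two values of the likelihood
  ratio \<open>Q\<^sup>t/P\<close> on the support of \<open>P\<close>.\<close>

definition F :: real where
  "F = tempered_share \<tau> (real V / real K - 1) (1 - \<epsilon>) \<epsilon>"

definition lmax :: real where
  "lmax = (1 - tempered_share \<tau> \<mu> (1 - a) a) / \<rho> * F"

definition lmin :: real where
  "lmin = tempered_share \<tau> \<mu> (1 - a) a / (1 - \<rho>) * F"

lemma F_pos: "0 < F"
  using \<epsilon>_less_1 unfolding F_def tempered_share_def by (intro divide_pos_pos add_pos_nonneg) auto

lemma average_lmax_lmin: "\<rho> * lmax + (1 - \<rho>) * lmin = F"
proof -
  have "\<rho> * lmax = (1 - tempered_share \<tau> \<mu> (1 - a) a) * F"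
    "(1 - \<rho>) * lmin = tempered_share \<tau> \<mu> (1 - a) a * F"
    using \<rho>_pos \<rho>_less_1 unfolding lmax_def lmin_def by simp_all
  then show ?thesis by (simp add: algebra_simps)
qed

lemma lmax_eq: "lmax = \<mu> powr (- \<tau>) / (1 - \<rho>) * (a powr \<tau> / ((1 - a) powr \<tau> + \<mu> powr (1 - \<tau>) * a powr \<tau>)) * F"
proof -
  have "0 < \<mu>" "0 < a" using \<mu>_def \<rho>_pos \<rho>_less_1 a_ge by auto
  then have "0 < (1 - a) powr \<tau> + \<mu> powr (1 - \<tau>) * a powr \<tau>"
    by (intro add_nonneg_pos) auto
  then have "1 - tempered_share \<tau> \<mu> (1 - a) a
      = \<mu> powr (1 - \<tau>) * a powr \<tau> / ((1 - a) powr \<tau> + \<mu> powr (1 - \<tau>) * a powr \<tau>)"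
    unfolding tempered_share_def by (simp add: field_simps)
  moreover have "\<mu> powr (1 - \<tau>) / \<rho> = \<mu> powr (- \<tau>) / (1 - \<rho>)"
    using \<open>0 < \<mu>\<close> \<rho>_pos \<rho>_less_1 unfolding powr_diff powr_minus_divide by (simp add: \<mu>_def field_simps)
  ultimately show ?thesis
    unfolding lmax_def by (metis (no_types, lifting) times_divide_eq_left times_divide_eq_right mult.commute)
qed

lemma Pc_sum_eq_1:
  assumes "length c < L" "set c \<subseteq> {1..V}"
  shows "(\<Sum>y\<in>{1..V}. Pc c y) = 1"
proof -
  have "S c \<subseteq> {1..V}" "card (S c) = K"
    using S_sub[OF assms] by auto
  then show ?thesis
    using K_pos unfolding Pc_def by (simp add: sum.If_cases Int_absorb1)
qed

lemma tempered_Qc_l1: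
  assumes "length c = l1 - 1"
  shows "x \<in> {1..m} \<Longrightarrow> tempered V \<tau> Qc c x = (1 - tempered_share \<tau> \<mu> (1 - a) a) / real m"
    and "x \<in> {m<..K} \<Longrightarrow> tempered V \<tau> Qc c x = tempered_share \<tau> \<mu> (1 - a) a / real (K - m)"
proof -
  have a: "0 < a" "0 \<le> 1 - a"
    using a_ge a_le_1 \<rho>_pos by auto
  have blocks: "{1..m} \<subseteq> {1..V}" "{m<..K} \<subseteq> {1..V}" "{1..m} \<inter> {m<..K} = {}"
    using m_less_K K_less_V by auto
  have "tempered_share \<tau> (real (K - m) / real m) a (1 - a) + tempered_share \<tau> \<mu> (1 - a) a = 1"
    unfolding \<mu>_eq using a m_pos m_less_K by (intro tempered_share_complement) auto
  then show "tempered V \<tau> Qc c x = (1 - tempered_share \<tau> \<mu> (1 - a) a) / real m"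
    if "x \<in> {1..m}"
    using tempered_two_block[OF blocks a(1)[THEN less_imp_le] a(2), of Qc c x \<tau>] that
    by (simp add: Qc_l1[OF assms] eq_diff_eq)
  show "tempered V \<tau> Qc c x = tempered_share \<tau> \<mu> (1 - a) a / real (K - m)"
    if "x \<in> {m<..K}"
  proof -
    have "Qc c y = (if y \<in> {m<..K} then (1 - a) / card {m<..K} else if y \<in> {1..m} then a / card {1..m} else 0)" for y
      by (auto simp: Qc_l1[OF assms])
    then show ?thesis
      using tempered_two_block[OF blocks(2,1) _ a(2) a(1)[THEN less_imp_le], of Qc c x \<tau>] blocks(3) that
      by (auto simp: \<mu>_eq)
  qed
qed

lemma tempered_Qc_l2:
  assumes "length c = l2 - 1" "set c \<subseteq> {1..V}" "x \<in> S c"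
  shows "tempered V \<tau> Qc c x = F / real K"
proof -
  have "length c < L" using assms(1) l2 by auto
  then have S: "S c \<subseteq> {1..V}" "card (S c) = K" using S_sub assms(2) by auto
  then have "card ({1..V} - S c) = V - K"
    by (simp add: card_Diff_subset finite_subset)
  moreover have "real (V - K) / real K = real V / real K - 1"
    using K_pos K_less_V by (simp add: of_nat_diff field_simps)
  ultimately show ?thesis
    using tempered_two_block[of "S c" V "{1..V} - S c" "1 - \<epsilon>" \<epsilon> Qc c x \<tau>] S assms(3) \<epsilon>_nonneg \<epsilon>_less_1
    by (auto simp: Qc_l2[OF assms(1)] F_def)
qed

lemma tempered_Qc_other:
  assumes "length c < L" "length c \<noteq> l1 - 1" "length c \<noteq> l2 - 1" "set c \<subseteq> {1..V}" "x \<in> S c"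
  shows "tempered V \<tau> Qc c x = 1 / real K"
proof -
  have "S c \<subseteq> {1..V}" "card (S c) = K" using S_sub assms(1,4) by auto
  then show ?thesis
    using tempered_two_block[of "S c" V "{}" 1 0 Qc c x \<tau>] assms(5)
    by (auto simp: Qc_other[OF assms(2,3)] Pc_def tempered_share_def)
qed

lemma tempered_Qc_l1_ratio:
  assumes "length c = l1 - 1" "x \<in> {1..K}"
  shows "real K * tempered V \<tau> Qc c x * F = (if x \<le> m then lmax else lmin)"
  using tempered_Qc_l1[OF assms(1), of x] assms(2) unfolding lmax_def lmin_def
  by (auto simp: \<rho>_eq one_minus_\<rho>_eq[unfolded \<rho>_eq])

lemma lmin_le_lmax: "lmin \<le> lmax"
proof -
  define c :: "nat list" where "c = replicate (l1 - 1) 1"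
  have c: "length c = l1 - 1" by (simp add: c_def)
  have "(1 - a) / real (K - m) \<le> a / real m"
    using a_ge a_le_1 m_pos m_less_K unfolding \<rho>_eq by (simp add: of_nat_diff field_simps)
  then have "tempered V \<tau> Qc c (Suc m) \<le> tempered V \<tau> Qc c 1"
    using a_le_1 m_pos m_less_K \<tau>_nonneg by (intro tempered_mono) (auto simp: Qc_l1[OF c])
  moreover have "lmin = real K * tempered V \<tau> Qc c (Suc m) * F"
    using tempered_Qc_l1_ratio[OF c, of "Suc m"] m_less_K by simp
  moreover have "lmax = real K * tempered V \<tau> Qc c 1 * F"
    using tempered_Qc_l1_ratio[OF c, of 1] m_pos m_less_K by simp
  ultimately show ?thesis
    using F_pos K_pos by (simp add: mult_left_mono mult_right_mono)
qed

lemma lmax_pos: "0 < lmax"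
proof -
  have "F \<le> lmax"
    using average_lmax_lmin lmin_le_lmax \<rho>_less_1 mult_left_mono[OF lmin_le_lmax, of "1 - \<rho>"]
    by (simp add: algebra_simps)
  then show ?thesis using F_pos by simp
qed

lemma ar_dist_tempered_Qc:
  assumes xs: "xs \<in> seqs V L" and P: "ar_dist Pc L xs \<noteq> 0"
  shows "ar_dist (tempered V \<tau> Qc) L xs = ar_dist Pc L xs * (if xs ! (l1 - 1) \<le> m then lmax else lmin)"
proof -
  have ctx: "length (take (l - 1) xs) = l - 1" "set (take (l - 1) xs) \<subseteq> {1..V}" "l - 1 < L"
    if "l \<in> {1..L}" for l
    using xs that set_take_subset[of "l - 1" xs] by (auto simp: seqs_def)
  have in_S: "xs ! (l - 1) \<in> S (take (l - 1) xs)" if "l \<in> {1..L}" for l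
    using P that unfolding ar_dist_def by (auto simp: Pc_def split: if_splits)
  define ratio where "ratio = real K * tempered V \<tau> Qc (take (l1 - 1) xs) (xs ! (l1 - 1))"
  have "ar_dist (tempered V \<tau> Qc) L xs
      = (\<Prod>l\<in>{1..L}. 1 / real K * ((if l = l1 then ratio else 1) * (if l = l2 then F else 1)))"
    unfolding ar_dist_def
  proof (rule prod.cong[OF refl])
    fix l assume l: "l \<in> {1..L}"
    consider "l = l1" | "l = l2" | "l \<noteq> l1" "l \<noteq> l2" by blast
    then show "tempered V \<tau> Qc (take (l - 1) xs) (xs ! (l - 1))
        = 1 / real K * ((if l = l1 then ratio else 1) * (if l = l2 then F else 1))"
    proof cases
      case 3
      then have "l - 1 \<noteq> l1 - 1" "l - 1 \<noteq> l2 - 1" using l l1 l2 by auto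
      then show ?thesis using 3 tempered_Qc_other ctx[OF l] in_S[OF l] by simp
    qed (use l1_neq_l2 K_pos ratio_def tempered_Qc_l2 ctx[OF l] in_S[OF l] in auto)
  qed
  also have "\<dots> = (\<Prod>l\<in>{1..L}. 1 / real K)
      * ((\<Prod>l\<in>{1..L}. if l = l1 then ratio else 1) * (\<Prod>l\<in>{1..L}. if l = l2 then F else 1))"
    by (simp only: prod.distrib)
  also have "\<dots> = (\<Prod>l\<in>{1..L}. 1 / real K) * (ratio * F)"
    using l1 l2 by simp
  also have "(\<Prod>l\<in>{1..L}. 1 / real K) = ar_dist Pc L xs"
    unfolding ar_dist_def using in_S by (intro prod.cong) (auto simp: Pc_def)
  also have "ratio * F = (if xs ! (l1 - 1) \<le> m then lmax else lmin)"
    unfolding ratio_def using tempered_Qc_l1_ratio[OF ctx(1)[OF l1]] in_S[OF l1] S_l1 ctx[OF l1] by simp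
  finally show ?thesis .
qed

lemma precision_tempered_Qc:
  "precision lam (ar_dist Pc L) (ar_dist (tempered V \<tau> Qc) L) (seqs V L)
    = \<rho> * min lam lmax + (1 - \<rho>) * min lam lmin"
proof -
  let ?ratio = "\<lambda>y. if y \<le> m then lmax else lmin"
  have "precision lam (ar_dist Pc L) (ar_dist (tempered V \<tau> Qc) L) (seqs V L)
      = (\<Sum>xs\<in>seqs V L. ar_dist Pc L xs * min lam (?ratio (xs ! (l1 - 1))))"
    using ar_dist_tempered_Qc
    by (intro precision_eq_sum_min_ratio)
      (auto simp: ar_dist_def Pc_def tempered_def intro!: prod_nonneg divide_nonneg_nonneg sum_nonneg)
  also have "\<dots> = (\<Sum>y\<in>{1..V}. (if y \<in> {1..K} then 1 / real K else 0) * min lam (?ratio y))"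
    using Pc_sum_eq_1 l1 by (intro sum_ar_dist_nth) (auto simp: Pc_def S_l1)
  also have "\<dots> = (\<Sum>y\<in>{1..V} \<inter> {1..K}. min lam (?ratio y) / real K)"
    unfolding sum.inter_restrict[OF finite_atLeastAtMost] by (intro sum.cong) auto
  also have "{1..V} \<inter> {1..K} = {1..m} \<union> {m<..K}"
    using K_less_V m_less_K by auto
  also have "(\<Sum>y\<in>{1..m} \<union> {m<..K}. min lam (?ratio y) / real K)
      = real m / real K * min lam lmax + real (K - m) / real K * min lam lmin"
    by (subst sum.union_disjoint) auto
  also have "\<dots> = \<rho> * min lam lmax + (1 - \<rho>) * min lam lmin"
    using m_less_K K_pos by (simp add: \<rho>_eq of_nat_diff diff_divide_distrib)
  finally show ?thesis .
qed

lemma precision_tempered_Qc_regimes: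
  shows "lmax \<le> lam \<Longrightarrow> precision lam (ar_dist Pc L) (ar_dist (tempered V \<tau> Qc) L) (seqs V L) = F"
    and "lmin \<le> lam \<Longrightarrow> lam \<le> lmax \<Longrightarrow>
      precision lam (ar_dist Pc L) (ar_dist (tempered V \<tau> Qc) L) (seqs V L) = \<rho> * lam + (1 - \<rho>) * lmin"
    and "lam \<le> lmin \<Longrightarrow> precision lam (ar_dist Pc L) (ar_dist (tempered V \<tau> Qc) L) (seqs V L) = lam"
  using lmin_le_lmax average_lmax_lmin by (auto simp: precision_tempered_Qc algebra_simps)

end


theorem propositionA2:
  fixes V L K l1 l2 :: nat
    and \<rho> \<mu> a b \<epsilon> t \<tau> F lmin lmax :: real
    and S :: "nat list \<Rightarrow> nat set"
    and Pc Qc :: "nat list \<Rightarrow> nat \<Rightarrow> real"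
  assumes "L \<ge> 2" and "1 \<le> K" and "K < V"
    and "l1 \<in> {1..L}" and "l2 \<in> {1..L}" and "l1 \<noteq> l2"
    and "0 < \<rho>" and "\<rho> < 1" and "\<exists>m::nat. \<rho> * real K = real m"
    and "\<mu> = \<rho> / (1 - \<rho>)"
    and "\<rho> \<le> a" and "a \<le> 1" and "b = \<mu> * (1 - a)"
    and "0 \<le> \<epsilon>" and "\<epsilon> \<le> 1/2"
    and S_sub: "\<And>c. length c < L \<Longrightarrow> set c \<subseteq> {1..V} \<Longrightarrow> S c \<subseteq> {1..V} \<and> card (S c) = K"
    and S_l1: "\<And>c. length c = l1 - 1 \<Longrightarrow> set c \<subseteq> {1..V} \<Longrightarrow> S c = {1..K}"
    and Pc_def: "\<And>c x. Pc c x = (if x \<in> S c then 1 / real K else 0)"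
    and Qc_def: "\<And>c x. Qc c x =
        (if length c = l1 - 1 then
           (if 1 \<le> x \<and> real x \<le> \<rho> * real K then a / (\<rho> * real K)
            else if \<rho> * real K < real x \<and> x \<le> K then b / (\<rho> * real K)
            else 0)
         else if length c = l2 - 1 then
           (if x \<in> S c then (1 - \<epsilon>) / real K
            else if x \<in> {1..V} then \<epsilon> / real (V - K) else 0)
         else Pc c x)"
    and "t > 0" and "\<tau> = 1 / t"
    and F_def: "F = (1 - \<epsilon>) powr \<tau> /
        ((1 - \<epsilon>) powr \<tau> + (real V / real K - 1) powr (1 - \<tau>) * \<epsilon> powr \<tau>)"
    and lmin_def: "lmin = 1 / (1 - \<rho>) *
        ((1 - a) powr \<tau> / ((1 - a) powr \<tau> + \<mu> powr (1 - \<tau>) * a powr \<tau>)) * F"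
    and lmax_def: "lmax = \<mu> powr (- \<tau>) / (1 - \<rho>) *
        (a powr \<tau> / ((1 - a) powr \<tau> + \<mu> powr (1 - \<tau>) * a powr \<tau>)) * F"
  shows "(\<forall>lam. lam \<ge> lmax \<longrightarrow>
            precision lam (ar_dist Pc L) (ar_dist (tempered V \<tau> Qc) L) (seqs V L) = F \<and>
            recall lam (ar_dist Pc L) (ar_dist (tempered V \<tau> Qc) L) (seqs V L) = F / lam)
       \<and> (\<forall>lam. lmin \<le> lam \<and> lam \<le> lmax \<and> lam > 0 \<longrightarrow>
            precision lam (ar_dist Pc L) (ar_dist (tempered V \<tau> Qc) L) (seqs V L) =
              \<rho> * lam + (1 - a) powr \<tau> / ((1 - a) powr \<tau> + \<mu> powr (1 - \<tau>) * a powr \<tau>) * F \<and>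
            recall lam (ar_dist Pc L) (ar_dist (tempered V \<tau> Qc) L) (seqs V L) =
              \<rho> + 1 / lam * ((1 - a) powr \<tau> / ((1 - a) powr \<tau> + \<mu> powr (1 - \<tau>) * a powr \<tau>) * F))
       \<and> (\<forall>lam. 0 < lam \<and> lam \<le> lmin \<longrightarrow>
            precision lam (ar_dist Pc L) (ar_dist (tempered V \<tau> Qc) L) (seqs V L) = lam \<and>
            recall lam (ar_dist Pc L) (ar_dist (tempered V \<tau> Qc) L) (seqs V L) = 1)"
proof -
  obtain m :: nat where m: "\<rho> * real K = real m" using assms(9) by blast
  interpret M: two_position_perturbation V L K m l1 l2 \<rho> \<mu> a b \<epsilon> \<tau> S Pc Qc
    using assms m by unfold_locales auto
  have F_eq: "M.F = F" using F_def by (simp add: M.F_def tempered_share_def)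
  have lmin_eq: "M.lmin = lmin" using lmin_def F_eq by (simp add: M.lmin_def tempered_share_def)
  have lmax_eq: "M.lmax = lmax" using lmax_def F_eq by (simp add: M.lmax_eq)
  have lmin_share: "(1 - \<rho>) * lmin = (1 - a) powr \<tau> / ((1 - a) powr \<tau> + \<mu> powr (1 - \<tau>) * a powr \<tau>) * F"
    using lmin_def \<open>\<rho> < 1\<close> by simp
  note precision = M.precision_tempered_Qc_regimes[unfolded F_eq lmin_eq lmax_eq]
  have "0 < lmax" using M.lmax_pos lmax_eq by simp
  then show ?thesis
    by (auto simp: precision recall_eq_precision_divide lmin_share add_divide_distrib)
qed

end
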